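(* Let $\alpha,p,q>0$ with $p>1$, let $F$ be the CDF of the Dagum distribution $GBP(\alpha,1,p,q)$ with mean $\mu=q\,\alpha\,B\!\left(\alpha+\frac1p,1-\frac1p\right)$, let $y>0$ and $w=\frac{y^p}{q^p+y^p}$. Then $$\mathrm{CRPS}(F\mid y) = 2\mu - q\,\frac{\Gamma\!\left(1-\frac1p\right)\Gamma\!\left(2\alpha+\frac1p\right)}{\Gamma(2\alpha)} - y + 2y\left(\frac{y^p}{q^p+y^p}\right)^{\alpha-1}\left(1-\frac{q^p}{q^p+y^p}\;{}_2F_1\!\left(1,\alpha;\alpha+\tfrac1p;w\right)\right).$$
   Context: The generalized Beta-prime distribution $GBP(\alpha,\beta,p,q)$ with parameters $\alpha,\beta,p,q>0$ is the distribution on $(0,\infty)$ with density $p_Z(z)=\frac{p}{qB(\alpha,\beta)}\frac{(z/q)^{\alpha p-1}}{(1+(z/q)^p)^{\alpha+\beta}}$ for $z>0$; the Dagum distribution is the case $\beta=1$, whose mean is finite iff $p>1$. For a CDF $F$ and observation $y\in\mathbb R$, $\mathrm{CRPS}(F\mid y)=\int_{\mathbb R}(F(x)-H(x-y))^2\,dx$ with $H$ the Heaviside step function. $B$ is the Beta function and ${}_2F_1$ the Gauss hypergeometric function. *)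

theory Defs
  imports "HOL-Analysis.Analysis"
begin

definition gbp_density :: "real \<Rightarrow> real \<Rightarrow> real \<Rightarrow> real \<Rightarrow> real \<Rightarrow> real" where
  "gbp_density \<alpha> \<beta> p q z =
     (if z > 0 then p / (q * Beta \<alpha> \<beta>) * ((z / q) powr (\<alpha> * p - 1)
        / (1 + (z / q) powr p) powr (\<alpha> + \<beta>)) else 0)"

definition gbp_cdf :: "real \<Rightarrow> real \<Rightarrow> real \<Rightarrow> real \<Rightarrow> real \<Rightarrow> real" where
  "gbp_cdf \<alpha> \<beta> p q x = integral {..x} (gbp_density \<alpha> \<beta> p q)"

definition dagum_cdf :: "real \<Rightarrow> real \<Rightarrow> real \<Rightarrow> real \<Rightarrow> real" where
  "dagum_cdf \<alpha> p q = gbp_cdf \<alpha> 1 p q"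

definition heaviside :: "real \<Rightarrow> real" where
  "heaviside t = (if t \<ge> 0 then 1 else 0)"

definition crps :: "(real \<Rightarrow> real) \<Rightarrow> real \<Rightarrow> real" where
  "crps F y = integral UNIV (\<lambda>x. (F x - heaviside (x - y))\<^sup>2)"

definition hyp2F1 :: "real \<Rightarrow> real \<Rightarrow> real \<Rightarrow> real \<Rightarrow> real" where
  "hyp2F1 a b c z = (\<Sum>n. pochhammer a n * pochhammer b n / (pochhammer c n * fact n) * z ^ n)"

end

theory Submission
  imports Defs "HOL-Real_Asymp.Real_Asymp"
begin

text \<open>
  On \<open>[0,\<infinity>)\<close> the Dagum CDF is \<open>F = W\<^sup>\<alpha>\<close>, where \<open>W(x) = (x/q)\<^sup>p / (1 + (x/q)\<^sup>p)\<close>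
  is the log-logistic CDF. Splitting at \<open>y\<close>, the CRPS integrand is
  \<open>(1 - F)\<^sup>2 + [x \<le> y] (2F - 1)\<close>. Since \<open>(1 - F)\<^sup>2 = 2 (1 - F) - (1 - F\<^sup>2)\<close> and
  \<open>F\<^sup>2 = W\<^sup>2\<^sup>\<alpha>\<close>, the first part integrates to \<open>2 \<mu>\<^sub>\<alpha> - \<mu>\<^sub>2\<^sub>\<alpha>\<close>, where
  \<open>\<mu>\<^sub>b = \<integral>\<^sub>0\<^sup>\<infinity> (1 - W\<^sup>b) = b q B(b + 1/p, 1 - 1/p)\<close> is the mean of the Dagum
  distribution with parameter \<open>b\<close>, computed by parts and the substitution \<open>t = W(x)\<close>.
  For the second part, \<open>x W\<^sup>\<alpha> \<^sub>2F\<^sub>1(1, \<alpha>; \<alpha> + 1/p + 1; W) / (\<alpha> p + 1)\<close> is an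
  antiderivative of \<open>W\<^sup>\<alpha>\<close> by the hypergeometric differential equation, and Gauss'
  contiguous relation \<open>1 - (1 - z) \<^sub>2F\<^sub>1(1, a; c; z) = (c - a)/c z \<^sub>2F\<^sub>1(1, a; c + 1; z)\<close>
  turns its value at \<open>y\<close> into the stated form.
\<close>

section \<open>The hypergeometric series with first parameter one\<close>

lemma hyp2F1_one_left: "hyp2F1 1 a c z = (\<Sum>n. pochhammer a n / pochhammer c n * z ^ n)"
  unfolding hyp2F1_def by (rule suminf_cong) (simp add: pochhammer_fact[symmetric])

lemma pochhammer_ratio_Suc:
  fixes a c :: real
  assumes "c > 0"
  shows "pochhammer a (Suc n) / pochhammer c (Suc n) = pochhammer a n / pochhammer c n * (a + n) / (c + n)"
  using assms pochhammer_pos[of c n] by (simp add: pochhammer_Suc)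

lemma pochhammer_ratio_bounds:
  fixes a c :: real
  assumes "0 < a" "a \<le> c"
  shows "0 < pochhammer a n / pochhammer c n" "pochhammer a n / pochhammer c n \<le> 1"
proof -
  show "0 < pochhammer a n / pochhammer c n"
    using assms by (simp add: pochhammer_pos)
  show "pochhammer a n / pochhammer c n \<le> 1"
  proof (induction n)
    case (Suc n)
    have "pochhammer a (Suc n) / pochhammer c (Suc n) = pochhammer a n / pochhammer c n * ((a + n) / (c + n))"
      using assms by (simp add: pochhammer_ratio_Suc)
    also have "\<dots> \<le> 1 * 1"
      using Suc assms by (intro mult_mono) (auto simp: pochhammer_pos)
    finally show ?case by simp
  qed simp
qed

lemma summable_power_series_bounded:
  fixes f :: "nat \<Rightarrow> real"
  assumes "\<And>n. \<bar>f n\<bar> \<le> M" "\<bar>z\<bar> < 1"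
  shows "summable (\<lambda>n. f n * z ^ n)"
proof (rule summable_comparison_test[of _ "\<lambda>n. M * \<bar>z\<bar> ^ n"])
  show "\<exists>N. \<forall>n\<ge>N. norm (f n * z ^ n) \<le> M * \<bar>z\<bar> ^ n"
    using assms by (auto simp: abs_mult power_abs intro!: mult_right_mono)
  show "summable (\<lambda>n. M * \<bar>z\<bar> ^ n)"
    using assms by (intro summable_mult summable_geometric) auto
qed

lemma summable_hyp2F1_one:
  fixes a c z :: real
  assumes "0 < a" "a \<le> c" "\<bar>z\<bar> < 1"
  shows "summable (\<lambda>n. pochhammer a n / pochhammer c n * z ^ n)"
proof (rule summable_power_series_bounded[where M = 1, OF _ assms(3)])
  fix n
  show "\<bar>pochhammer a n / pochhammer c n\<bar> \<le> 1"
    using pochhammer_ratio_bounds[OF assms(1,2), of n] by linarith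
qed

lemma sums_hyp2F1_one:
  fixes a c z :: real
  assumes "0 < a" "a \<le> c" "\<bar>z\<bar> < 1"
  shows "(\<lambda>n. pochhammer a n / pochhammer c n * z ^ n) sums hyp2F1 1 a c z"
  unfolding hyp2F1_one_left using summable_hyp2F1_one[OF assms] by (rule summable_sums)

lemma sums_of_nat_times_power_series:
  fixes f :: "nat \<Rightarrow> real"
  assumes "\<And>z. \<bar>z\<bar> < 1 \<Longrightarrow> summable (\<lambda>n. f n * z ^ n)" "\<bar>z\<bar> < 1"
  shows "(\<lambda>n. real n * f n * z ^ n) sums (z * (\<Sum>n. diffs f n * z ^ n))"
proof -
  have "summable (\<lambda>n. diffs f n * z ^ n)"
    by (rule termdiff_converges[where K = 1]) (use assms in auto)
  then have "(\<lambda>n. z * (diffs f n * z ^ n)) sums (z * (\<Sum>n. diffs f n * z ^ n))"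
    by (intro sums_mult summable_sums)
  moreover have "(\<lambda>n. z * (diffs f n * z ^ n)) = (\<lambda>n. real (Suc n) * f (Suc n) * z ^ Suc n)"
    by (auto simp: diffs_def)
  ultimately show ?thesis
    using sums_Suc_iff[of "\<lambda>n. real n * f n * z ^ n"] by simp
qed

lemma hyp2F1_one_has_derivative:
  fixes a c z :: real
  assumes "0 < a" "a \<le> c" "\<bar>z\<bar> < 1"
  shows "(hyp2F1 1 a c has_real_derivative
          (\<Sum>n. diffs (\<lambda>n. pochhammer a n / pochhammer c n) n * z ^ n)) (at z)"
  unfolding hyp2F1_one_left[abs_def]
  by (rule termdiffs_strong'[where K = 1]) (use summable_hyp2F1_one[OF assms(1,2)] assms(3) in auto)

lemma hyp2F1_one_ode:
  fixes a c z :: real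
  assumes "0 < a" "a \<le> c" "\<bar>z\<bar> < 1"
  shows "(c - 1 - a * z) * hyp2F1 1 a c z + z * (1 - z) * deriv (hyp2F1 1 a c) z = c - 1"
proof -
  define r where "r n = pochhammer a n / pochhammer c n" for n
  define H where "H = hyp2F1 1 a c z"
  define N where "N = z * deriv (hyp2F1 1 a c) z"
  have H: "(\<lambda>n. r n * z ^ n) sums H"
    unfolding r_def H_def by (rule sums_hyp2F1_one[OF assms])
  have N: "(\<lambda>n. real n * r n * z ^ n) sums N"
    using sums_of_nat_times_power_series[of r z] summable_hyp2F1_one[OF assms(1,2)]
      DERIV_imp_deriv[OF hyp2F1_one_has_derivative[OF assms]] assms(3)
    unfolding r_def N_def by auto
  have "(\<lambda>n. (c - 1) * (r n * z ^ n) + real n * r n * z ^ n) sums ((c - 1) * H + N)"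
    by (intro sums_add sums_mult H N)
  then have lhs: "(\<lambda>n. (c - 1 + n) * r n * z ^ n) sums ((c - 1) * H + N)"
    by (simp add: algebra_simps)
  have "(\<lambda>n. z * (a * (r n * z ^ n) + real n * r n * z ^ n)) sums (z * (a * H + N))"
    by (intro sums_add sums_mult H N)
  moreover have "z * (a * (r n * z ^ n) + real n * r n * z ^ n) = (c - 1 + Suc n) * r (Suc n) * z ^ Suc n" for n
  proof -
    have "r (Suc n) = r n * (a + n) / (c + n)"
      using assms pochhammer_ratio_Suc[of c a n] unfolding r_def by simp
    then show ?thesis using assms by (simp add: field_simps)
  qed
  ultimately have "(\<lambda>n. (c - 1 + n) * r n * z ^ n) sums (z * (a * H + N) + (c - 1))"
    using sums_Suc_iff[of "\<lambda>n. (c - 1 + n) * r n * z ^ n"] by (simp add: r_def)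
  with lhs have "(c - 1) * H + N = z * (a * H + N) + (c - 1)"
    by (rule sums_unique2)
  then show ?thesis
    unfolding H_def N_def by (simp add: algebra_simps)
qed

lemma hyp2F1_one_contiguous:
  fixes a c z :: real
  assumes "0 < a" "a \<le> c" "\<bar>z\<bar> < 1"
  shows "1 - (1 - z) * hyp2F1 1 a c z = (c - a) / c * z * hyp2F1 1 a (c + 1) z"
proof -
  define r where "r n = pochhammer a n / pochhammer c n" for n
  have H: "(\<lambda>n. r n * z ^ n) sums hyp2F1 1 a c z"
    unfolding r_def by (rule sums_hyp2F1_one[OF assms])
  have G: "(\<lambda>n. pochhammer a n / pochhammer (c + 1) n * z ^ n) sums hyp2F1 1 a (c + 1) z"
    by (rule sums_hyp2F1_one) (use assms in auto)
  have "(\<lambda>n. z * (r n * z ^ n) - r (Suc n) * z ^ Suc n) sums (z * hyp2F1 1 a c z - (hyp2F1 1 a c z - 1))"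
    using H sums_Suc_iff[of "\<lambda>n. r n * z ^ n"]
    by (intro sums_diff sums_mult) (auto simp: r_def)
  moreover have "z * (r n * z ^ n) - r (Suc n) * z ^ Suc n
      = (c - a) / c * z * (pochhammer a n / pochhammer (c + 1) n * z ^ n)" for n
  proof -
    have "c + real n \<noteq> 0" using assms by auto
    have "r (Suc n) = r n * (a + n) / (c + n)"
      using assms pochhammer_ratio_Suc[of c a n] unfolding r_def by simp
    then have "z * (r n * z ^ n) - r (Suc n) * z ^ Suc n = r n * z ^ Suc n * (1 - (a + n) / (c + n))"
      by (simp add: algebra_simps)
    also have "1 - (a + n) / (c + n) = (c - a) / (c + n)"
      using \<open>c + real n \<noteq> 0\<close> by (simp add: field_simps)
    also have "r n * z ^ Suc n * ((c - a) / (c + n)) = (c - a) * z * z ^ n * (r n / (c + n))"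
      by simp
    also have "r n / (c + n) = pochhammer a n / pochhammer (c + 1) n / c"
    proof -
      have "c * pochhammer (c + 1) n = pochhammer c n * (c + n)"
        by (metis pochhammer_Suc pochhammer_rec)
      then show ?thesis
        unfolding r_def by (simp add: mult.commute)
    qed
    finally show ?thesis
      by (simp add: mult_ac)
  qed
  ultimately have "(\<lambda>n. (c - a) / c * z * (pochhammer a n / pochhammer (c + 1) n * z ^ n))
      sums (1 - (1 - z) * hyp2F1 1 a c z)"
    by (simp add: algebra_simps)
  then show ?thesis
    using sums_unique2[OF _ sums_mult[OF G]] by blast
qed

section \<open>The log-logistic distribution\<close>

definition loglogistic_cdf :: "real \<Rightarrow> real \<Rightarrow> real \<Rightarrow> real" where
  "loglogistic_cdf p q x = (x / q) powr p / (1 + (x / q) powr p)"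

definition loglogistic_quantile :: "real \<Rightarrow> real \<Rightarrow> real \<Rightarrow> real" where
  "loglogistic_quantile p q t = q * (t / (1 - t)) powr (1 / p)"

lemma loglogistic_cdf_nonneg: "0 \<le> loglogistic_cdf p q x"
  by (simp add: loglogistic_cdf_def add_pos_nonneg)

lemma loglogistic_cdf_less_1: "loglogistic_cdf p q x < 1"
  by (simp add: loglogistic_cdf_def add_pos_nonneg)

lemma loglogistic_cdf_0 [simp]: "loglogistic_cdf p q 0 = 0"
  by (simp add: loglogistic_cdf_def)

lemma one_minus_loglogistic_cdf: "1 - loglogistic_cdf p q x = 1 / (1 + (x / q) powr p)"
proof -
  have "1 + (x / q) powr p > 0" by (simp add: add_pos_nonneg)
  then show ?thesis by (simp add: loglogistic_cdf_def field_simps)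
qed

context
  fixes p q :: real
  assumes p: "p > 0" and q: "q > 0"
begin

lemma loglogistic_cdf_pos: "x > 0 \<Longrightarrow> 0 < loglogistic_cdf p q x"
  using q by (simp add: loglogistic_cdf_def add_pos_pos)

lemma loglogistic_cdf_eq: "x > 0 \<Longrightarrow> loglogistic_cdf p q x = x powr p / (q powr p + x powr p)"
  using q by (simp add: loglogistic_cdf_def powr_divide field_simps add_pos_pos)

lemma loglogistic_cdf_has_derivative:
  assumes "x > 0"
  shows "(loglogistic_cdf p q has_real_derivative
           p / x * loglogistic_cdf p q x * (1 - loglogistic_cdf p q x)) (at x)"
proof -
  define v where "v = (x / q) powr p"
  have v: "v \<ge> 0" unfolding v_def by simp
  have dv: "((\<lambda>x. (x / q) powr p) has_real_derivative p * v / x) (at x)"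
  proof -
    have "((\<lambda>x. (x / q) powr p) has_real_derivative p * (x / q) powr (p - 1) * (1 / q)) (at x)"
      using assms q by (auto intro!: derivative_eq_intros)
    moreover have "p * (x / q) powr (p - 1) * (1 / q) = p * v / x"
      using assms q by (simp add: v_def powr_diff field_simps)
    ultimately show ?thesis by simp
  qed
  have "(loglogistic_cdf p q has_real_derivative
          ((p * v / x) * (1 + v) - v * (p * v / x)) / ((1 + v) * (1 + v))) (at x)"
  proof -
    have dd: "((\<lambda>x. 1 + (x / q) powr p) has_real_derivative p * v / x) (at x)"
      using DERIV_add[OF DERIV_const dv] by simp
    have "1 + (x / q) powr p \<noteq> 0"
      using add_pos_nonneg[of 1 "(x / q) powr p"] by simp
    then show ?thesis
      unfolding loglogistic_cdf_def[abs_def] v_def by (rule DERIV_divide[OF dv dd, unfolded v_def])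
  qed
  moreover have "((p * v / x) * (1 + v) - v * (p * v / x)) / ((1 + v) * (1 + v)) =
      p / x * loglogistic_cdf p q x * (1 - loglogistic_cdf p q x)"
    unfolding one_minus_loglogistic_cdf using v assms
    by (simp add: loglogistic_cdf_def v_def[symmetric] field_simps)
  ultimately show ?thesis by simp
qed

lemma loglogistic_cdf_powr_has_derivative:
  assumes "x > 0"
  shows "((\<lambda>x. loglogistic_cdf p q x powr b) has_real_derivative
           b * p / x * loglogistic_cdf p q x powr b * (1 - loglogistic_cdf p q x)) (at x)"
proof -
  define W where "W = loglogistic_cdf p q x"
  have W: "W > 0" unfolding W_def using loglogistic_cdf_pos[OF assms] .
  have "((\<lambda>x. loglogistic_cdf p q x powr b) has_real_derivative
           b * W powr (b - 1) * (p / x * W * (1 - W))) (at x)"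
    using DERIV_fun_powr[OF loglogistic_cdf_has_derivative[OF assms] W[unfolded W_def], of b]
    unfolding W_def by simp
  moreover have "b * W powr (b - 1) * (p / x * W * (1 - W)) = b * p / x * W powr b * (1 - W)"
    using W assms by (simp add: powr_diff field_simps)
  ultimately show ?thesis
    unfolding W_def by metis
qed

lemma continuous_on_loglogistic_cdf:
  assumes "A \<subseteq> {0..}" shows "continuous_on A (loglogistic_cdf p q)"
proof -
  have "1 + (x / q) powr p \<noteq> 0" for x
    using add_pos_nonneg[of 1 "(x / q) powr p"] by simp
  then show ?thesis
    unfolding loglogistic_cdf_def[abs_def] using assms p q
    by (intro continuous_intros continuous_on_powr') auto
qed

lemma continuous_on_loglogistic_cdf_powr:
  "A \<subseteq> {0..} \<Longrightarrow> b > 0 \<Longrightarrow> continuous_on A (\<lambda>x. loglogistic_cdf p q x powr b)"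
  by (intro continuous_on_powr' continuous_on_loglogistic_cdf continuous_intros)
     (auto simp: loglogistic_cdf_nonneg)

lemma loglogistic_cdf_quantile:
  assumes "0 < t" "t < 1"
  shows "loglogistic_cdf p q (loglogistic_quantile p q t) = t"
proof -
  have "(loglogistic_quantile p q t / q) powr p = t / (1 - t)"
    unfolding loglogistic_quantile_def using assms p q by (simp add: powr_powr)
  then show ?thesis
    unfolding loglogistic_cdf_def using assms by (simp only:) (simp add: field_simps)
qed

end

section \<open>The Dagum distribution and its mean\<close>

lemma mult_Beta_eq_Gamma:
  fixes a b d :: real
  assumes "b > 0" "a + d = b + 1"
  shows "b * Beta a d = Gamma a * Gamma d / Gamma b"
proof -
  have "b \<notin> \<int>\<^sub>\<le>\<^sub>0" using assms nonpos_Ints_nonpos by force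
  then have "Gamma (b + 1) = b * Gamma b" by (rule Gamma_plus1)
  moreover have "Gamma b \<noteq> 0" using assms Gamma_real_pos[of b] by linarith
  ultimately show ?thesis
    using assms by (simp add: Beta_def field_simps)
qed

lemma Beta_1_right:
  fixes a :: real
  assumes "a > 0"
  shows "Beta a 1 = 1 / a"
  using mult_Beta_eq_Gamma[of a a 1] assms Gamma_real_pos[OF assms] by (simp add: field_simps)

lemma dagum_mean_eq_Gamma:
  fixes b p q :: real
  assumes "b > 0"
  shows "b * q * Beta (b + 1 / p) (1 - 1 / p) = q * (Gamma (1 - 1 / p) * Gamma (b + 1 / p) / Gamma b)"
proof -
  have "b * Beta (b + 1 / p) (1 - 1 / p) = Gamma (b + 1 / p) * Gamma (1 - 1 / p) / Gamma b"
    using assms by (intro mult_Beta_eq_Gamma) auto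
  then show ?thesis
    by (metis mult.commute mult.left_commute times_divide_eq_right)
qed

lemma dagum_density_eq:
  assumes "a > 0" "p > 0" "q > 0" "x > 0"
  shows "gbp_density a 1 p q x = a * p / x * loglogistic_cdf p q x powr a * (1 - loglogistic_cdf p q x)"
proof -
  define u where "u = x / q"
  define v where "v = u powr p"
  have u: "u > 0" and v: "v > 0" using assms by (simp_all add: u_def v_def)
  have e1: "u powr (a * p - 1) = v powr a / u"
    using u by (simp add: v_def powr_diff powr_powr mult.commute)
  have e2: "(1 + v) powr (a + 1) = (1 + v) powr a * (1 + v)"
    using v by (simp add: powr_add)
  have "gbp_density a 1 p q x = p / (q * (1 / a)) * (v powr a / u / ((1 + v) powr a * (1 + v)))"
    unfolding gbp_density_def Beta_1_right[OF assms(1)] u_def[symmetric] v_def[symmetric] e1 e2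
    using assms by simp
  also have "\<dots> = a * p / (q * u) * (v powr a / (1 + v) powr a) * (1 / (1 + v))"
    using assms u v by (simp add: field_simps)
  also have "q * u = x" using assms by (simp add: u_def)
  also have "v powr a / (1 + v) powr a = loglogistic_cdf p q x powr a"
  proof -
    have "loglogistic_cdf p q x = v / (1 + v)"
      by (simp add: loglogistic_cdf_def u_def v_def)
    then show ?thesis using v by (simp add: powr_divide)
  qed
  also have "1 / (1 + v) = 1 - loglogistic_cdf p q x"
    using one_minus_loglogistic_cdf by (simp add: u_def v_def)
  finally show ?thesis .
qed

lemma dagum_cdf_eq:
  assumes "a > 0" "p > 0" "q > 0"
  shows "dagum_cdf a p q x = (if x \<ge> 0 then loglogistic_cdf p q x powr a else 0)"
proof (cases "x \<ge> 0")
  case True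
  have "(gbp_density a 1 p q has_integral
          (loglogistic_cdf p q x powr a - loglogistic_cdf p q 0 powr a)) {0..x}"
  proof (rule fundamental_theorem_of_calculus_interior[OF True])
    show "continuous_on {0..x} (\<lambda>x. loglogistic_cdf p q x powr a)"
      using assms by (intro continuous_on_loglogistic_cdf_powr) auto
    fix t assume "t \<in> {0<..<x}"
    then show "((\<lambda>x. loglogistic_cdf p q x powr a) has_vector_derivative gbp_density a 1 p q t) (at t)"
      using loglogistic_cdf_powr_has_derivative[OF assms(2,3), of t a] dagum_density_eq[OF assms, of t]
      by (simp add: has_real_derivative_iff_has_vector_derivative)
  qed
  moreover have "(gbp_density a 1 p q has_integral 0) {..0}"
    by (rule has_integral_is_0) (auto simp: gbp_density_def)
  ultimately have "(gbp_density a 1 p q has_integral (0 + loglogistic_cdf p q x powr a)) ({..0} \<union> {0..x})"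
    using assms by (intro has_integral_Un) (auto intro: negligible_subset[of "{0}"])
  moreover have "{..0} \<union> {0..x} = {..x}" using True by auto
  ultimately show ?thesis
    using True unfolding dagum_cdf_def gbp_cdf_def by (simp add: integral_unique)
next
  case False
  have "(gbp_density a 1 p q has_integral 0) {..x}"
    by (rule has_integral_is_0) (use False in \<open>auto simp: gbp_density_def\<close>)
  then show ?thesis
    using False unfolding dagum_cdf_def gbp_cdf_def by (simp add: integral_unique)
qed

text \<open>For \<open>x > 0\<close> this is \<open>x\<close> times the density of \<open>GBP(b,1,p,q)\<close>
  (\<open>dagum_density_eq\<close>), so its integral over \<open>[0,\<infinity>)\<close> is the Dagum mean.\<close>
definition dagum_mean_integrand :: "real \<Rightarrow> real \<Rightarrow> real \<Rightarrow> real \<Rightarrow> real" where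
  "dagum_mean_integrand b p q x = b * p * loglogistic_cdf p q x powr b * (1 - loglogistic_cdf p q x)"

context
  fixes p q :: real
  assumes p: "p > 1" and q: "q > 0"
begin

lemma loglogistic_quantile_has_derivative:
  assumes "0 < t" "t < 1"
  shows "(loglogistic_quantile p q has_real_derivative
           q / p * (t / (1 - t)) powr (1 / p - 1) / (1 - t)\<^sup>2) (at t)"
proof -
  have "((\<lambda>t. t / (1 - t)) has_real_derivative 1 / (1 - t)\<^sup>2) (at t)"
    using assms by (auto intro!: derivative_eq_intros simp: power2_eq_square)
  then have "((\<lambda>t. q * (t / (1 - t)) powr (1 / p)) has_real_derivative
      q * (1 / p * (t / (1 - t)) powr (1 / p - of_nat 1) * (1 / (1 - t)\<^sup>2))) (at t)"
    using assms by (intro DERIV_cmult DERIV_fun_powr) auto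
  then show ?thesis
    unfolding loglogistic_quantile_def[abs_def] by simp
qed

lemma tendsto_loglogistic_quantile_0: "(loglogistic_quantile p q \<longlongrightarrow> 0) (at_right 0)"
  unfolding loglogistic_quantile_def[abs_def] using p q by real_asymp

lemma filterlim_loglogistic_quantile_1: "filterlim (loglogistic_quantile p q) at_top (at_left 1)"
  unfolding loglogistic_quantile_def[abs_def] using p q by real_asymp

lemma dagum_mean_integrand_quantile:
  assumes "0 < t" "t < 1"
  shows "dagum_mean_integrand b p q (loglogistic_quantile p q t)
           * (q / p * (t / (1 - t)) powr (1 / p - 1) / (1 - t)\<^sup>2)
         = b * q * (t powr ((b + 1 / p) - 1) * (1 - t) powr ((1 - 1 / p) - 1))"
proof -
  define u where "u = 1 - t"
  have u: "u > 0" using assms by (simp add: u_def)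
  have W: "loglogistic_cdf p q (loglogistic_quantile p q t) = t"
    using loglogistic_cdf_quantile[of p q t] p q assms by simp
  have "(t / u) powr (1 / p - 1) = t powr (1 / p - 1) / (u powr (1 / p) / u)"
    using assms u by (simp add: powr_divide powr_diff)
  then have "dagum_mean_integrand b p q (loglogistic_quantile p q t)
        * (q / p * (t / (1 - t)) powr (1 / p - 1) / (1 - t)\<^sup>2)
      = b * q * ((t powr b * t powr (1 / p - 1)) * (1 / u powr (1 / p)))"
    unfolding dagum_mean_integrand_def W u_def[symmetric] using p u
    by (simp add: field_simps power2_eq_square)
  also have "t powr b * t powr (1 / p - 1) = t powr ((b + 1 / p) - 1)"
    using assms by (simp add: powr_add[symmetric] algebra_simps)
  also have "1 / u powr (1 / p) = u powr ((1 - 1 / p) - 1)"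
    using u by (simp add: powr_minus_divide)
  finally show ?thesis
    by (simp add: u_def)
qed

lemma dagum_mean_integral_quantile:
  assumes "b > 0"
  defines "f \<equiv> \<lambda>t. dagum_mean_integrand b p q (loglogistic_quantile p q t)
                     * (q / p * (t / (1 - t)) powr (1 / p - 1) / (1 - t)\<^sup>2)"
  shows "set_integrable lborel (einterval 0 1) f"
    and "(LBINT t=0..1. f t) = b * q * Beta (b + 1 / p) (1 - 1 / p)"
proof -
  define \<beta> where "\<beta> t = t powr ((b + 1 / p) - 1) * (1 - t) powr ((1 - 1 / p) - 1)" for t
  have ab: "b + 1 / p > 0" "1 - 1 / p > 0" using assms p by (simp_all add: add_pos_pos)
  have Ioo: "einterval 0 1 = {0<..<(1::real)}"
    by (simp add: zero_ereal_def one_ereal_def)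
  have f: "f t = b * q * \<beta> t" if "t \<in> {0<..<1}" for t
    using dagum_mean_integrand_quantile[of t b] that unfolding f_def \<beta>_def by simp
  have "set_integrable lborel {0<..<1} \<beta>"
    unfolding \<beta>_def by (rule set_integrable_subset[OF integrable_Beta[OF ab]]) auto
  then have "set_integrable lborel {0<..<1} (\<lambda>t. b * q * \<beta> t)"
    by (intro set_integrable_mult_right)
  then show integrable: "set_integrable lborel (einterval 0 1) f"
    unfolding Ioo by (rule set_integrable_cong[THEN iffD1, rotated -1]) (auto simp: f)
  have "(\<beta> has_integral Beta (b + 1 / p) (1 - 1 / p)) {0<..<1}"
    using has_integral_Beta_real[OF ab] unfolding \<beta>_def by (simp add: has_integral_Icc_iff_Ioo)
  then have "((\<lambda>t. b * q * \<beta> t) has_integral b * q * Beta (b + 1 / p) (1 - 1 / p)) {0<..<1}"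
    by (rule has_integral_mult_right)
  then have "(f has_integral b * q * Beta (b + 1 / p) (1 - 1 / p)) (einterval 0 1)"
    unfolding Ioo by (rule has_integral_eq[rotated]) (auto simp: f)
  then show "(LBINT t=0..1. f t) = b * q * Beta (b + 1 / p) (1 - 1 / p)"
    using interval_integral_eq_integral'[OF _ integrable] by (simp add: integral_unique)
qed

lemma dagum_mean_integral:
  assumes b: "b > 0"
  shows "set_integrable lborel {0..} (dagum_mean_integrand b p q)"
    and "(LINT x:{0..}|lborel. dagum_mean_integrand b p q x) = b * q * Beta (b + 1 / p) (1 - 1 / p)"
proof -
  define g where "g = dagum_mean_integrand b p q"
  define \<phi>' where "\<phi>' t = q / p * (t / (1 - t)) powr (1 / p - 1) / (1 - t)\<^sup>2" for t
  have g_nonneg: "0 \<le> g x" for x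
    unfolding g_def dagum_mean_integrand_def using b p q loglogistic_cdf_less_1[of p q x] by auto
  have "continuous_on {0..} g"
    unfolding g_def dagum_mean_integrand_def[abs_def] using b p q
    by (intro continuous_intros continuous_on_loglogistic_cdf_powr continuous_on_loglogistic_cdf) auto
  then have g_cont: "isCont g (loglogistic_quantile p q t)" if "0 < t" "t < 1" for t
    using that q by (intro continuous_on_interior) (auto simp: loglogistic_quantile_def)
  have \<phi>'_cont: "isCont \<phi>' t" if "0 < t" "t < 1" for t
    unfolding \<phi>'_def[abs_def] using that by (intro continuous_intros) auto
  have hyps: "(0::ereal) < 1"
      "\<And>t. 0 < ereal t \<Longrightarrow> ereal t < 1 \<Longrightarrow> (loglogistic_quantile p q has_real_derivative \<phi>' t) (at t)"
      "\<And>t. 0 < ereal t \<Longrightarrow> ereal t < 1 \<Longrightarrow> isCont g (loglogistic_quantile p q t)"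
      "\<And>t. 0 < ereal t \<Longrightarrow> ereal t < 1 \<Longrightarrow> isCont \<phi>' t"
      "\<And>t. 0 < ereal t \<Longrightarrow> ereal t < 1 \<Longrightarrow> 0 \<le> g (loglogistic_quantile p q t)"
      "\<And>t. 0 \<le> ereal t \<Longrightarrow> ereal t \<le> 1 \<Longrightarrow> 0 \<le> \<phi>' t"
      "((ereal \<circ> loglogistic_quantile p q \<circ> real_of_ereal) \<longlongrightarrow> 0) (at_right 0)"
      "((ereal \<circ> loglogistic_quantile p q \<circ> real_of_ereal) \<longlongrightarrow> \<infinity>) (at_left 1)"
    using loglogistic_quantile_has_derivative g_cont \<phi>'_cont g_nonneg
      tendsto_loglogistic_quantile_0 filterlim_loglogistic_quantile_1 p q
    by (auto simp: \<phi>'_def zero_ereal_def one_ereal_def ereal_tendsto_simps)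
  have "set_integrable lborel (einterval 0 1) (\<lambda>t. g (loglogistic_quantile p q t) * \<phi>' t)"
    unfolding g_def \<phi>'_def using dagum_mean_integral_quantile(1)[OF b] .
  note substitution = interval_integral_substitution_nonneg[OF hyps this]
  have "set_integrable lborel ({0<..} \<union> {0}) g"
    using substitution(1) by (intro set_integrable_Un) (auto simp: zero_ereal_def)
  moreover have "{0<..} \<union> {0} = {0::real..}" by auto
  ultimately show "set_integrable lborel {0..} (dagum_mean_integrand b p q)"
    by (simp add: g_def)
  have "(LINT x:{0..}|lborel. g x) = (LINT x:{0<..}|lborel. g x)"
    by (rule set_integral_discrete_difference[where X = "{0}"]) auto
  also have "\<dots> = (LBINT x=0..\<infinity>. g x)"
    by (simp add: interval_lebesgue_integral_def zero_ereal_def)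
  finally show "(LINT x:{0..}|lborel. dagum_mean_integrand b p q x) = b * q * Beta (b + 1 / p) (1 - 1 / p)"
    using substitution(2) dagum_mean_integral_quantile(2)[OF b] by (simp add: g_def \<phi>'_def)
qed

end

context
  fixes b p q :: real
  assumes b: "b > 0" and p: "p > 1" and q: "q > 0"
begin

lemma dagum_tail_integral_interval:
  assumes "B \<ge> 0"
  shows "((\<lambda>x. 1 - loglogistic_cdf p q x powr b) has_integral
           B * (1 - loglogistic_cdf p q B powr b) + integral {0..B} (dagum_mean_integrand b p q)) {0..B}"
proof -
  have "set_integrable lborel {0..B} (dagum_mean_integrand b p q)"
    by (rule set_integrable_subset[OF dagum_mean_integral(1)[OF p q b]]) auto
  then have "dagum_mean_integrand b p q integrable_on {0..B}"
    by (rule set_borel_integral_eq_integral(1))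
  then have mean_part:
      "(dagum_mean_integrand b p q has_integral integral {0..B} (dagum_mean_integrand b p q)) {0..B}"
    by (rule integrable_integral)
  have "((\<lambda>x. 1 - loglogistic_cdf p q x powr b - dagum_mean_integrand b p q x) has_integral
      B * (1 - loglogistic_cdf p q B powr b) - 0 * (1 - loglogistic_cdf p q 0 powr b)) {0..B}"
  proof (rule fundamental_theorem_of_calculus_interior[OF assms])
    show "continuous_on {0..B} (\<lambda>x. x * (1 - loglogistic_cdf p q x powr b))"
      using p q b by (intro continuous_intros continuous_on_loglogistic_cdf_powr) auto
    fix x assume "x \<in> {0<..<B}"
    then have x: "x > 0" by simp
    have "((\<lambda>x. x * (1 - loglogistic_cdf p q x powr b)) has_real_derivative
        1 * (1 - loglogistic_cdf p q x powr b)
        + (0 - b * p / x * loglogistic_cdf p q x powr b * (1 - loglogistic_cdf p q x)) * x) (at x)"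
      using p q x
      by (intro DERIV_mult DERIV_ident DERIV_diff DERIV_const loglogistic_cdf_powr_has_derivative[of p q x b]) auto
    moreover have "1 * (1 - loglogistic_cdf p q x powr b)
        + (0 - b * p / x * loglogistic_cdf p q x powr b * (1 - loglogistic_cdf p q x)) * x
        = 1 - loglogistic_cdf p q x powr b - dagum_mean_integrand b p q x"
      using x by (simp add: dagum_mean_integrand_def)
    ultimately show "((\<lambda>x. x * (1 - loglogistic_cdf p q x powr b)) has_vector_derivative
        1 - loglogistic_cdf p q x powr b - dagum_mean_integrand b p q x) (at x)"
      by (simp add: has_real_derivative_iff_has_vector_derivative)
  qed
  from has_integral_add[OF this mean_part] show ?thesis
    by simp
qed

lemma tendsto_integral_dagum_mean_integrand:
  "((\<lambda>B. integral {0..B} (dagum_mean_integrand b p q))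
     \<longlongrightarrow> b * q * Beta (b + 1 / p) (1 - 1 / p)) at_top"
proof -
  note integrable = dagum_mean_integral(1)[OF p q b]
  have "(LINT x:{0..B}|lborel. dagum_mean_integrand b p q x) = integral {0..B} (dagum_mean_integrand b p q)"
    for B
    by (rule set_borel_integral_eq_integral(2), rule set_integrable_subset[OF integrable]) auto
  then show ?thesis
    using tendsto_set_lebesgue_integral_at_top[OF _ integrable]
    unfolding dagum_mean_integral(2)[OF p q b] by simp
qed

lemma dagum_tail_integral:
  "((\<lambda>x. 1 - loglogistic_cdf p q x powr b) has_integral b * q * Beta (b + 1 / p) (1 - 1 / p)) {0..}"
proof (rule has_integral_to_inf)
  show "(\<lambda>x. 1 - loglogistic_cdf p q x powr b) integrable_on {0..B}" for B
    using dagum_tail_integral_interval[of B] by (cases "B \<ge> 0") auto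
  show "0 \<le> 1 - loglogistic_cdf p q x powr b" for x
    using b p q loglogistic_cdf_nonneg[of p q x] loglogistic_cdf_less_1[of p q x] by (simp add: powr_le1)
  have "((\<lambda>B. B * (1 - loglogistic_cdf p q B powr b)) \<longlongrightarrow> 0) at_top"
    unfolding loglogistic_cdf_def using b p q by real_asymp
  moreover note tendsto_integral_dagum_mean_integrand
  ultimately have lim: "((\<lambda>B. B * (1 - loglogistic_cdf p q B powr b)
        + integral {0..B} (dagum_mean_integrand b p q)) \<longlongrightarrow> 0 + b * q * Beta (b + 1 / p) (1 - 1 / p)) at_top"
    by (rule tendsto_add)
  have "eventually (\<lambda>B. B * (1 - loglogistic_cdf p q B powr b)
      + integral {0..B} (dagum_mean_integrand b p q) = integral {0..B} (\<lambda>x. 1 - loglogistic_cdf p q x powr b))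
      at_top"
    using eventually_ge_at_top[of 0]
    by eventually_elim (use integral_unique[OF dagum_tail_integral_interval] in simp)
  from tendsto_cong[OF this] lim
  show "((\<lambda>B. integral {0..B} (\<lambda>x. 1 - loglogistic_cdf p q x powr b))
      \<longlongrightarrow> b * q * Beta (b + 1 / p) (1 - 1 / p)) at_top"
    by simp
qed

end

section \<open>The integral of the Dagum CDF\<close>

context
  fixes a p q :: real
  assumes a: "a > 0" and p: "p > 0" and q: "q > 0"
begin

lemma loglogistic_cdf_powr_antiderivative:
  assumes x: "x > 0"
  defines "G \<equiv> hyp2F1 1 a (a + 1 / p + 1)"
  shows "((\<lambda>x. x * loglogistic_cdf p q x powr a * G (loglogistic_cdf p q x) / (a * p + 1))
          has_real_derivative loglogistic_cdf p q x powr a) (at x)"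
proof -
  define z where "z = loglogistic_cdf p q x"
  define A where "A = z powr a"
  define G' where "G' = deriv G z"
  have z: "0 < z" "z < 1"
    unfolding z_def using loglogistic_cdf_pos[OF p q x] loglogistic_cdf_less_1 by auto
  have "a \<le> a + 1 / p + 1" using p by simp
  note G_facts = hyp2F1_one_has_derivative[OF a this] hyp2F1_one_ode[OF a this]
  have dG: "(G has_real_derivative G') (at z)"
    unfolding G'_def G_def using G_facts(1)[of z] z DERIV_imp_deriv by force
  have ode: "(a + 1 / p - a * z) * G z + z * (1 - z) * G' = a + 1 / p"
    using G_facts(2)[of z] z unfolding G_def G'_def by simp
  have dGW: "((\<lambda>x. G (loglogistic_cdf p q x)) has_real_derivative G' * (p / x * z * (1 - z))) (at x)"
    using DERIV_chain2[OF dG[unfolded z_def] loglogistic_cdf_has_derivative[OF p q x]] unfolding z_def .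
  have dA: "((\<lambda>x. loglogistic_cdf p q x powr a) has_real_derivative a * p / x * A * (1 - z)) (at x)"
    using loglogistic_cdf_powr_has_derivative[OF p q x, of a] unfolding A_def z_def .
  have "((\<lambda>x. x * loglogistic_cdf p q x powr a * G (loglogistic_cdf p q x)) has_real_derivative
      (1 * A + (a * p / x * A * (1 - z)) * x) * G z + (G' * (p / x * z * (1 - z))) * (x * A)) (at x)"
    using DERIV_mult[OF DERIV_mult[OF DERIV_ident dA] dGW] unfolding A_def z_def .
  moreover have "(1 * A + (a * p / x * A * (1 - z)) * x) * G z + (G' * (p / x * z * (1 - z))) * (x * A)
      = A * p * ((a + 1 / p - a * z) * G z + z * (1 - z) * G')"
    using x p by (simp add: field_simps)
  also have "\<dots> = A * (a * p + 1)"
    unfolding ode using p by (simp add: field_simps)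
  finally have "((\<lambda>x. x * loglogistic_cdf p q x powr a * G (loglogistic_cdf p q x)) has_real_derivative
      A * (a * p + 1)) (at x)" .
  moreover have "a * p + 1 \<noteq> 0"
    using a p by (metis add_pos_pos mult_pos_pos zero_less_one order_less_irrefl)
  ultimately show ?thesis
    using DERIV_cdivide[of _ "A * (a * p + 1)" x UNIV "a * p + 1"] unfolding A_def z_def by simp
qed

lemma integral_loglogistic_cdf_powr:
  assumes "y \<ge> 0"
  shows "((\<lambda>x. loglogistic_cdf p q x powr a) has_integral
           y * loglogistic_cdf p q y powr a * hyp2F1 1 a (a + 1 / p + 1) (loglogistic_cdf p q y) / (a * p + 1))
         {0..y}"
proof -
  define G where "G = hyp2F1 1 a (a + 1 / p + 1)"
  have "isCont G z" if "z \<in> {0..<1}" for z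
    unfolding G_def using that a p by (auto intro!: DERIV_isCont[OF hyp2F1_one_has_derivative])
  then have "continuous_on {0..<1} G"
    by (intro continuous_at_imp_continuous_on) auto
  then have "continuous_on {0..y} (\<lambda>x. G (loglogistic_cdf p q x))"
    by (rule continuous_on_compose2[OF _ continuous_on_loglogistic_cdf[OF p q]])
       (auto simp: loglogistic_cdf_nonneg loglogistic_cdf_less_1)
  moreover have "continuous_on {0..y} (\<lambda>x. loglogistic_cdf p q x powr a)"
    using a by (intro continuous_on_loglogistic_cdf_powr[OF p q]) auto
  moreover have "a * p + 1 \<noteq> 0"
    using a p by (metis add_pos_pos mult_pos_pos zero_less_one order_less_irrefl)
  ultimately have "continuous_on {0..y}
      (\<lambda>x. x * loglogistic_cdf p q x powr a * G (loglogistic_cdf p q x) / (a * p + 1))"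
    by (intro continuous_on_divide continuous_on_mult continuous_on_id continuous_on_const) auto
  then have "((\<lambda>x. loglogistic_cdf p q x powr a) has_integral
      y * loglogistic_cdf p q y powr a * G (loglogistic_cdf p q y) / (a * p + 1)
      - 0 * loglogistic_cdf p q 0 powr a * G (loglogistic_cdf p q 0) / (a * p + 1)) {0..y}"
    using loglogistic_cdf_powr_antiderivative
    by (intro fundamental_theorem_of_calculus_interior[OF assms])
       (auto simp: G_def has_real_derivative_iff_has_vector_derivative[symmetric])
  then show ?thesis
    by (simp add: G_def)
qed

lemma integral_loglogistic_cdf_powr_contiguous:
  assumes y: "y > 0"
  defines "W \<equiv> loglogistic_cdf p q y"
  shows "((\<lambda>x. loglogistic_cdf p q x powr a) has_integral
           y * W powr (a - 1) * (1 - (1 - W) * hyp2F1 1 a (a + 1 / p) W)) {0..y}"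
proof -
  have W: "0 < W" "W < 1"
    unfolding W_def using loglogistic_cdf_pos[OF p q y] loglogistic_cdf_less_1 by auto
  have "y * W powr a * hyp2F1 1 a (a + 1 / p + 1) W / (a * p + 1)
      = y * W powr (a - 1) * (1 - (1 - W) * hyp2F1 1 a (a + 1 / p) W)"
    using hyp2F1_one_contiguous[of a "a + 1 / p" W] a p W by (simp add: powr_diff field_simps)
  then show ?thesis
    using integral_loglogistic_cdf_powr[of y] y unfolding W_def by simp
qed

end

context
  fixes a p q y :: real
  assumes a: "a > 0" and p: "p > 1" and q: "q > 0" and y: "y > 0"
begin

lemma crps_dagum_has_integral:
  defines "W \<equiv> loglogistic_cdf p q"
  shows "((\<lambda>x. (dagum_cdf a p q x - heaviside (x - y))\<^sup>2) has_integral
           (2 * (a * q * Beta (a + 1 / p) (1 - 1 / p))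
             - q * (Gamma (1 - 1 / p) * Gamma (2 * a + 1 / p) / Gamma (2 * a)))
           + (2 * (y * W y powr (a - 1) * (1 - (1 - W y) * hyp2F1 1 a (a + 1 / p) (W y))) - y)) UNIV"
    (is "(?h has_integral ?tail + ?body) UNIV")
proof -
  have p0: "p > 0" using p by simp
  have F: "dagum_cdf a p q x = W x powr a" if "x \<ge> 0" for x
    using dagum_cdf_eq[OF a p0 q] that unfolding W_def by simp
  have W2: "W x powr (2 * a) = (W x powr a)\<^sup>2" for x
    by (metis mult_2 powr_add power2_eq_square)
  have "((\<lambda>x. 1 - W x powr (2 * a)) has_integral
      q * (Gamma (1 - 1 / p) * Gamma (2 * a + 1 / p) / Gamma (2 * a))) {0..}"
    using dagum_tail_integral[of "2 * a" p q] dagum_mean_eq_Gamma[of "2 * a" q p] a p q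
    unfolding W_def by simp
  then have "((\<lambda>x. 2 * (1 - W x powr a) - (1 - W x powr (2 * a))) has_integral ?tail) {0..}"
    unfolding W_def using a p q
    by (intro has_integral_diff has_integral_mult_right dagum_tail_integral)
  then have tail: "((\<lambda>x. (1 - W x powr a)\<^sup>2) has_integral ?tail) {0..}"
    by (rule has_integral_eq[rotated]) (unfold W2, simp add: power2_eq_square algebra_simps)
  have "((\<lambda>x. 1) has_integral y) {0..y}"
    using has_integral_const_real[of "1::real" 0 y] y by simp
  with integral_loglogistic_cdf_powr_contiguous[OF a p0 q y]
  have "((\<lambda>x. 2 * W x powr a - 1) has_integral ?body) {0..y}"
    unfolding W_def by (intro has_integral_diff has_integral_mult_right)
  then have body: "((\<lambda>x. if x \<in> {0..y} then 2 * W x powr a - 1 else 0) has_integral ?body) {0..}"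
    by (subst has_integral_restrict) auto
  have nonneg_part: "(?h has_integral ?tail + ?body) {0..}"
  proof (rule has_integral_spike[OF negligible_sing[of y] _ has_integral_add[OF tail body]])
    fix x assume "x \<in> {0..} - {y}"
    then show "?h x = (1 - W x powr a)\<^sup>2 + (if x \<in> {0..y} then 2 * W x powr a - 1 else 0)"
      using F[of x] by (auto simp: heaviside_def power2_eq_square algebra_simps)
  qed
  have "(?h has_integral 0) {..0}"
  proof (rule has_integral_is_0)
    fix x :: real assume "x \<in> {..0}"
    then show "?h x = 0"
      using dagum_cdf_eq[OF a p0 q, of x] a y by (cases "x = 0") (auto simp: heaviside_def)
  qed
  moreover note nonneg_part
  moreover have "negligible ({..0} \<inter> {0..} :: real set)"
    by (rule negligible_subset[OF negligible_sing[of 0]]) auto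
  ultimately have "(?h has_integral 0 + (?tail + ?body)) ({..0} \<union> {0..})"
    by (rule has_integral_Un)
  moreover have "{..0} \<union> {0..} = (UNIV :: real set)"
    by auto
  ultimately show ?thesis
    by simp
qed

end

theorem corollary2:
  fixes \<alpha> p q y :: real
  assumes "\<alpha> > 0" "p > 0" "q > 0" "p > 1" "y > 0"
  defines "F \<equiv> dagum_cdf \<alpha> p q"
    and "\<mu> \<equiv> q * \<alpha> * Beta (\<alpha> + 1 / p) (1 - 1 / p)"
    and "w \<equiv> y powr p / (q powr p + y powr p)"
  shows "(\<lambda>x. (F x - heaviside (x - y))\<^sup>2) integrable_on UNIV
    \<and> crps F y = 2 * \<mu> - q * (Gamma (1 - 1 / p) * Gamma (2 * \<alpha> + 1 / p) / Gamma (2 * \<alpha>)) - y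
        + 2 * y * (y powr p / (q powr p + y powr p)) powr (\<alpha> - 1)
          * (1 - q powr p / (q powr p + y powr p) * hyp2F1 1 \<alpha> (\<alpha> + 1 / p) w)"
proof -
  have W: "loglogistic_cdf p q y = w"
    using loglogistic_cdf_eq[OF assms(2,3,5)] unfolding w_def .
  have one_minus_w: "1 - w = q powr p / (q powr p + y powr p)"
  proof -
    have "q powr p + y powr p > 0" using assms(3,5) by (simp add: add_pos_pos)
    then show ?thesis unfolding w_def by (simp add: field_simps)
  qed
  have "((\<lambda>x. (F x - heaviside (x - y))\<^sup>2) has_integral
      2 * \<mu> - q * (Gamma (1 - 1 / p) * Gamma (2 * \<alpha> + 1 / p) / Gamma (2 * \<alpha>)) - y
      + 2 * y * (y powr p / (q powr p + y powr p)) powr (\<alpha> - 1)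
        * (1 - q powr p / (q powr p + y powr p) * hyp2F1 1 \<alpha> (\<alpha> + 1 / p) w)) UNIV"
    using crps_dagum_has_integral[OF assms(1,4,3,5)]
    unfolding F_def \<mu>_def W w_def[symmetric] one_minus_w[symmetric] by (simp add: algebra_simps)
  then show ?thesis
    unfolding crps_def by (simp add: integral_unique has_integral_integrable)
qed

end
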